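(* Under the hypotheses: $N\ge M$, $d_i>0$ for all $i$, $\mathbf{P}\in\mathbb{Z}_{\ge0}^N$ with $P_N>0$, $\mathbf{L}\in\mathbb{R}^{N\times M}$ full rank with non-negative entries and $L_{N,j}>0$ for all $j$, let $l$ be the Poisson log-likelihood and $\mathbf{T}$ the multiplicative map defined in the context. Then: (i) a point $\tilde{\boldsymbol\alpha}\ge 0$ is the (unique) maximizer of $l$ on the non-negative orthant if and only if it satisfies the KKT conditions $\tilde\alpha_j\,\partial_j l(\tilde{\boldsymbol\alpha})=0$ for all $j$ and $\partial_j l(\tilde{\boldsymbol\alpha})\le 0$ whenever $\tilde\alpha_j=0$; in particular the maximizer is a fixed point of $\mathbf{T}$; (ii) if $\boldsymbol\alpha$ has all components strictly positive, then $\mathbf{T}(\boldsymbol\alpha)$ has all components strictly positive; hence if $\boldsymbol\alpha^{(0)}>0$ componentwise, all iterates $\boldsymbol\alpha^{(n+1)}=\mathbf{T}(\boldsymbol\alpha^{(n)})$ are strictly positive; (iii) a strictly positive $\boldsymbol\alpha$ is a fixed point of $\mathbf{T}$ only if it is the maximizer of $l$ on the non-negative orthant.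
   Context: $l(\boldsymbol\alpha)=\sum_{i=1}^N\big(P_i\log d_i-(\mathbf{L}\boldsymbol\alpha)_iP_i-d_i e^{-(\mathbf{L}\boldsymbol\alpha)_i}-\log(P_i!)\big)$ for $\boldsymbol\alpha\ge0$, with gradient $\partial_j l(\boldsymbol\alpha)=\sum_i L_{i,j}\big(d_ie^{-(\mathbf{L}\boldsymbol\alpha)_i}-P_i\big)$. The map $\mathbf{T}:\mathbb{R}^M\to\mathbb{R}^M$ is $$\mathbf{T}(\boldsymbol\alpha)_j=\frac{\big(\mathbf{L}^T(\mathbf{d}\odot e^{-\mathbf{L}\boldsymbol\alpha})\big)_j}{(\mathbf{L}^T\mathbf{P})_j}\,\alpha_j,$$ where $\odot$ is the componentwise product and $e^{-\mathbf{L}\boldsymbol\alpha}$ is taken componentwise; the denominators are positive under the hypotheses. *)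

theory Defs
  imports Complex_Main
begin

text \<open>Vectors are functions nat => real indexed by 0..<M (resp. 0..<N); the matrix L is
  nat => nat => real with row index i < N and column index j < M.
  The paper's last index N corresponds to index N - 1 here.\<close>

definition Lmul :: "nat \<Rightarrow> (nat \<Rightarrow> nat \<Rightarrow> real) \<Rightarrow> (nat \<Rightarrow> real) \<Rightarrow> nat \<Rightarrow> real" where
  "Lmul M L \<alpha> i = (\<Sum>j<M. L i j * \<alpha> j)"

definition loglik :: "nat \<Rightarrow> nat \<Rightarrow> (nat \<Rightarrow> nat \<Rightarrow> real) \<Rightarrow> (nat \<Rightarrow> real) \<Rightarrow> (nat \<Rightarrow> nat)
    \<Rightarrow> (nat \<Rightarrow> real) \<Rightarrow> real" where
  "loglik N M L d P \<alpha> =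
     (\<Sum>i<N. real (P i) * ln (d i) - Lmul M L \<alpha> i * real (P i)
             - d i * exp (- Lmul M L \<alpha> i) - ln (fact (P i)))"

definition grad :: "nat \<Rightarrow> nat \<Rightarrow> (nat \<Rightarrow> nat \<Rightarrow> real) \<Rightarrow> (nat \<Rightarrow> real) \<Rightarrow> (nat \<Rightarrow> nat)
    \<Rightarrow> (nat \<Rightarrow> real) \<Rightarrow> nat \<Rightarrow> real" where
  "grad N M L d P \<alpha> j = (\<Sum>i<N. L i j * (d i * exp (- Lmul M L \<alpha> i) - real (P i)))"

definition Tmap :: "nat \<Rightarrow> nat \<Rightarrow> (nat \<Rightarrow> nat \<Rightarrow> real) \<Rightarrow> (nat \<Rightarrow> real) \<Rightarrow> (nat \<Rightarrow> nat)
    \<Rightarrow> (nat \<Rightarrow> real) \<Rightarrow> nat \<Rightarrow> real" where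
  "Tmap N M L d P \<alpha> j =
     (\<Sum>i<N. L i j * (d i * exp (- Lmul M L \<alpha> i))) / (\<Sum>i<N. L i j * real (P i)) * \<alpha> j"

definition nonneg_vec :: "nat \<Rightarrow> (nat \<Rightarrow> real) \<Rightarrow> bool" where
  "nonneg_vec M \<alpha> \<longleftrightarrow> (\<forall>j<M. 0 \<le> \<alpha> j)"

definition pos_vec :: "nat \<Rightarrow> (nat \<Rightarrow> real) \<Rightarrow> bool" where
  "pos_vec M \<alpha> \<longleftrightarrow> (\<forall>j<M. 0 < \<alpha> j)"

definition is_maximizer :: "nat \<Rightarrow> nat \<Rightarrow> (nat \<Rightarrow> nat \<Rightarrow> real) \<Rightarrow> (nat \<Rightarrow> real) \<Rightarrow> (nat \<Rightarrow> nat)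
    \<Rightarrow> (nat \<Rightarrow> real) \<Rightarrow> bool" where
  "is_maximizer N M L d P \<alpha> \<longleftrightarrow> nonneg_vec M \<alpha> \<and>
     (\<forall>\<beta>. nonneg_vec M \<beta> \<longrightarrow> loglik N M L d P \<beta> \<le> loglik N M L d P \<alpha>)"

definition full_col_rank :: "nat \<Rightarrow> nat \<Rightarrow> (nat \<Rightarrow> nat \<Rightarrow> real) \<Rightarrow> bool" where
  "full_col_rank N M L \<longleftrightarrow>
     (\<forall>a. (\<forall>i<N. Lmul M L a i = 0) \<longrightarrow> (\<forall>j<M. a j = 0))"

end

theory Submission imports Defs begin

text \<open>Each summand of the log-likelihood is a strictly concave function of \<open>(L\<alpha>)\<^sub>i\<close>, so \<open>l\<close> lies
  below its tangent plane at every point, strictly so unless \<open>L\<alpha>\<close> is unchanged. Hence the KKT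
  conditions are sufficient for a maximum, and since \<open>L\<close> has full column rank two maximizers
  coincide. Necessity follows from one-sided directional derivatives along the coordinate axes.
  Finally, \<open>T(\<alpha>)\<^sub>j = \<alpha>\<^sub>j\<close> is equivalent to \<open>\<alpha>\<^sub>j \<partial>\<^sub>j l(\<alpha>) = 0\<close>, because \<open>\<partial>\<^sub>j l\<close> is the
  numerator minus the (positive) denominator of the factor in \<open>T\<close>.\<close>

definition kkt_point :: "nat \<Rightarrow> nat \<Rightarrow> (nat \<Rightarrow> nat \<Rightarrow> real) \<Rightarrow> (nat \<Rightarrow> real) \<Rightarrow> (nat \<Rightarrow> nat)
    \<Rightarrow> (nat \<Rightarrow> real) \<Rightarrow> bool" where
  "kkt_point N M L d P \<alpha> \<longleftrightarrow>
     (\<forall>j<M. \<alpha> j * grad N M L d P \<alpha> j = 0) \<and> (\<forall>j<M. \<alpha> j = 0 \<longrightarrow> grad N M L d P \<alpha> j \<le> 0)"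

lemma add_one_less_exp:
  fixes z :: real
  assumes "z \<noteq> 0"
  shows "1 + z < exp z"
proof (cases "0 \<le> 1 + z/2")
  case True
  have "0 < z * z"
    using assms not_real_square_gt_zero by blast
  then have "1 + z < (1 + z/2)^2"
    by (simp add: power2_eq_square algebra_simps)
  also have "\<dots> \<le> exp (z/2)^2"
    using True by (intro power_mono) auto
  also have "\<dots> = exp z"
    by (simp add: power2_eq_square flip: exp_add)
  finally show ?thesis .
next
  case False
  then show ?thesis using exp_gt_zero[of z] by linarith
qed

lemma neg_exp_term_le_tangent:
  fixes x y D p :: real
  assumes "0 < D"
  shows "(- y * p - D * exp (- y)) - (- x * p - D * exp (- x)) \<le> (D * exp (- x) - p) * (y - x)"
proof -
  have "D * (exp (-x) * (1 + (x - y))) \<le> D * (exp (-x) * exp (x - y))"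
    using assms by (intro mult_left_mono) auto
  then show ?thesis by (simp add: algebra_simps flip: exp_add)
qed

lemma neg_exp_term_less_tangent:
  fixes x y D p :: real
  assumes "0 < D" and "x \<noteq> y"
  shows "(- y * p - D * exp (- y)) - (- x * p - D * exp (- x)) < (D * exp (- x) - p) * (y - x)"
proof -
  have "D * (exp (-x) * (1 + (x - y))) < D * (exp (-x) * exp (x - y))"
    using assms by (intro mult_strict_left_mono add_one_less_exp) auto
  then show ?thesis by (simp add: algebra_simps flip: exp_add)
qed

lemma Lmul_diff: "Lmul M L (\<lambda>k. a k - b k) i = Lmul M L a i - Lmul M L b i"
  unfolding Lmul_def by (simp add: algebra_simps sum_subtractf)

lemma Lmul_fun_upd_add:
  assumes "j < M"
  shows "Lmul M L (\<alpha>(j := \<alpha> j + t)) i = Lmul M L \<alpha> i + t * L i j"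
proof -
  have "Lmul M L (\<alpha>(j := \<alpha> j + t)) i = (\<Sum>k<M. L i k * \<alpha> k + (if k = j then t * L i j else 0))"
    unfolding Lmul_def by (rule sum.cong) (auto simp: algebra_simps)
  then show ?thesis
    using assms by (simp add: sum.distrib Lmul_def)
qed

lemma grad_eq_diff:
  "grad N M L d P \<alpha> j = (\<Sum>i<N. L i j * (d i * exp (- Lmul M L \<alpha> i))) - (\<Sum>i<N. L i j * real (P i))"
  unfolding grad_def by (simp add: sum_subtractf[symmetric] algebra_simps)

lemma sum_residual_Lmul_diff_eq_grad:
  "(\<Sum>i<N. (d i * exp (- Lmul M L a i) - real (P i)) * (Lmul M L b i - Lmul M L a i))
    = (\<Sum>j<M. grad N M L d P a j * (b j - a j))"
proof -
  have "(\<Sum>i<N. (d i * exp (- Lmul M L a i) - real (P i)) * (Lmul M L b i - Lmul M L a i))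
     = (\<Sum>i<N. \<Sum>j<M. (d i * exp (- Lmul M L a i) - real (P i)) * (L i j * (b j - a j)))"
    by (simp add: Lmul_def sum_distrib_left sum_subtractf[symmetric] right_diff_distrib)
  also have "\<dots> = (\<Sum>j<M. \<Sum>i<N. (d i * exp (- Lmul M L a i) - real (P i)) * (L i j * (b j - a j)))"
    by (rule sum.swap)
  also have "\<dots> = (\<Sum>j<M. grad N M L d P a j * (b j - a j))"
    unfolding grad_def sum_distrib_right by (intro sum.cong refl) (simp add: algebra_simps)
  finally show ?thesis .
qed

lemma loglik_diff_eq:
  "loglik N M L d P b - loglik N M L d P a =
    (\<Sum>i<N. (- Lmul M L b i * real (P i) - d i * exp (- Lmul M L b i))
           - (- Lmul M L a i * real (P i) - d i * exp (- Lmul M L a i)))"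
  unfolding loglik_def by (simp add: sum_subtractf[symmetric] algebra_simps)

lemma loglik_le_tangent:
  assumes "\<forall>i<N. 0 < d i"
  shows "loglik N M L d P b \<le> loglik N M L d P a + (\<Sum>j<M. grad N M L d P a j * (b j - a j))"
proof -
  have "loglik N M L d P b - loglik N M L d P a
     \<le> (\<Sum>i<N. (d i * exp (- Lmul M L a i) - real (P i)) * (Lmul M L b i - Lmul M L a i))"
    unfolding loglik_diff_eq using assms by (intro sum_mono neg_exp_term_le_tangent) auto
  then show ?thesis by (simp add: sum_residual_Lmul_diff_eq_grad)
qed

lemma loglik_less_tangent:
  assumes "\<forall>i<N. 0 < d i" and "i < N" and "Lmul M L a i \<noteq> Lmul M L b i"
  shows "loglik N M L d P b < loglik N M L d P a + (\<Sum>j<M. grad N M L d P a j * (b j - a j))"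
proof -
  have "loglik N M L d P b - loglik N M L d P a
     < (\<Sum>i<N. (d i * exp (- Lmul M L a i) - real (P i)) * (Lmul M L b i - Lmul M L a i))"
    unfolding loglik_diff_eq using assms
    by (intro sum_strict_mono_ex1 finite_lessThan ballI neg_exp_term_le_tangent
        bexI[of _ i] neg_exp_term_less_tangent) auto
  then show ?thesis by (simp add: sum_residual_Lmul_diff_eq_grad)
qed

lemma loglik_partial_derivative:
  assumes "j < M"
  shows "((\<lambda>t. loglik N M L d P (\<alpha>(j := \<alpha> j + t))) has_real_derivative grad N M L d P \<alpha> j) (at 0)"
proof -
  have "((\<lambda>t. \<Sum>i<N. real (P i) * ln (d i) - (Lmul M L \<alpha> i + t * L i j) * real (P i)
             - d i * exp (- (Lmul M L \<alpha> i + t * L i j)) - ln (fact (P i))) has_real_derivative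
        (\<Sum>i<N. - L i j * real (P i) + d i * exp (- Lmul M L \<alpha> i) * L i j)) (at 0)"
    by (rule DERIV_sum) (auto intro!: derivative_eq_intros)
  then show ?thesis
    unfolding loglik_def grad_def Lmul_fun_upd_add[OF assms] by (simp add: algebra_simps)
qed

lemma DERIV_nonpos_at_right_max:
  fixes f :: "real \<Rightarrow> real"
  assumes "(f has_real_derivative D) (at x)" and "\<And>t. 0 \<le> t \<Longrightarrow> f (x + t) \<le> f x"
  shows "D \<le> 0"
proof (rule ccontr)
  assume "\<not> D \<le> 0"
  then obtain e where "e > 0" and "\<forall>h>0. h < e \<longrightarrow> f x < f (x + h)"
    using DERIV_pos_inc_right[OF assms(1)] by auto
  then have "f x < f (x + e/2)" by auto
  with assms(2)[of "e/2"] \<open>e > 0\<close> show False by simp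
qed

lemma is_maximizer_imp_kkt_point:
  assumes "is_maximizer N M L d P a"
  shows "kkt_point N M L d P a"
proof -
  have a: "nonneg_vec M a" and max: "\<And>b. nonneg_vec M b \<Longrightarrow> loglik N M L d P b \<le> loglik N M L d P a"
    using assms unfolding is_maximizer_def by auto
  have grad_nonpos: "grad N M L d P a j \<le> 0"
    and grad_zero: "0 < a j \<Longrightarrow> grad N M L d P a j = 0" if j: "j < M" for j
  proof -
    let ?h = "\<lambda>t. loglik N M L d P (a(j := a j + t))"
    have deriv: "(?h has_real_derivative grad N M L d P a j) (at 0)"
      using loglik_partial_derivative[OF j] .
    have h_le: "?h t \<le> ?h 0" if "- a j \<le> t" for t
      using that a max[of "a(j := a j + t)"] by (auto simp: nonneg_vec_def)
    show "grad N M L d P a j \<le> 0"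
      using a j by (intro DERIV_nonpos_at_right_max[OF deriv] h_le) (auto simp: nonneg_vec_def)
    assume "0 < a j"
    then show "grad N M L d P a j = 0"
      by (intro DERIV_local_max[OF deriv, of "a j"] allI impI h_le) auto
  qed
  show ?thesis
    unfolding kkt_point_def
    using a grad_nonpos grad_zero by (force simp: nonneg_vec_def order.order_iff_strict)
qed

lemma kkt_point_grad_inner_nonpos:
  assumes "kkt_point N M L d P a" and "nonneg_vec M b"
  shows "(\<Sum>j<M. grad N M L d P a j * (b j - a j)) \<le> 0"
proof -
  have "grad N M L d P a j * (b j - a j) \<le> 0" if "j < M" for j
  proof (cases "a j = 0")
    case True
    then show ?thesis
      using assms that by (simp add: kkt_point_def nonneg_vec_def mult_nonpos_nonneg)
  next
    case False
    then show ?thesis using assms that by (force simp: kkt_point_def)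
  qed
  then show ?thesis by (auto intro: sum_nonpos)
qed

lemma kkt_point_imp_is_maximizer:
  assumes "\<forall>i<N. 0 < d i" and "nonneg_vec M a" and "kkt_point N M L d P a"
  shows "is_maximizer N M L d P a"
  unfolding is_maximizer_def
proof (intro conjI allI impI assms(2))
  fix b assume "nonneg_vec M b"
  then show "loglik N M L d P b \<le> loglik N M L d P a"
    using loglik_le_tangent[OF assms(1), of M L P b a] kkt_point_grad_inner_nonpos[OF assms(3)]
    by fastforce
qed

lemma is_maximizer_unique:
  assumes dpos: "\<forall>i<N. 0 < d i" and rank: "full_col_rank N M L"
    and a: "is_maximizer N M L d P a" and b: "is_maximizer N M L d P b"
  shows "\<forall>j<M. a j = b j"
proof -
  have "Lmul M L a i = Lmul M L b i" if "i < N" for i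
  proof (rule ccontr)
    assume "Lmul M L a i \<noteq> Lmul M L b i"
    then have "loglik N M L d P b < loglik N M L d P a + (\<Sum>j<M. grad N M L d P a j * (b j - a j))"
      using loglik_less_tangent[OF dpos \<open>i < N\<close>] by blast
    also have "\<dots> \<le> loglik N M L d P a"
      using kkt_point_grad_inner_nonpos[OF is_maximizer_imp_kkt_point[OF a]] b
      by (simp add: is_maximizer_def)
    finally have "loglik N M L d P b < loglik N M L d P a" .
    moreover have "loglik N M L d P a \<le> loglik N M L d P b"
      using a b unfolding is_maximizer_def by blast
    ultimately show False by simp
  qed
  then have "\<forall>i<N. Lmul M L (\<lambda>k. a k - b k) i = 0"
    by (simp add: Lmul_diff)
  then show ?thesis
    using rank unfolding full_col_rank_def by fastforce
qed

lemma Tmap_denominator_pos: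
  fixes N M :: nat and L :: "nat \<Rightarrow> nat \<Rightarrow> real" and P :: "nat \<Rightarrow> nat"
  assumes "0 < N" and "0 < P (N - 1)" and "\<forall>i<N. \<forall>j<M. 0 \<le> L i j" and "\<forall>j<M. 0 < L (N - 1) j"
    and "j < M"
  shows "0 < (\<Sum>i<N. L i j * real (P i))"
  using assms by (intro sum_pos2[of _ "N - 1"]) auto

lemma Tmap_fixed_iff:
  assumes "0 < (\<Sum>i<N. L i j * real (P i))"
  shows "Tmap N M L d P \<alpha> j = \<alpha> j \<longleftrightarrow> \<alpha> j * grad N M L d P \<alpha> j = 0"
  using assms unfolding Tmap_def grad_eq_diff by (auto simp: field_simps)

lemma Tmap_pos:
  assumes "0 < N" and "\<forall>i<N. 0 < d i" and "0 < P (N - 1)"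
    and "\<forall>i<N. \<forall>j<M. 0 \<le> L i j" and "\<forall>j<M. 0 < L (N - 1) j"
    and "pos_vec M \<alpha>"
  shows "pos_vec M (Tmap N M L d P \<alpha>)"
proof -
  have "0 < (\<Sum>i<N. L i j * (d i * exp (- Lmul M L \<alpha> i)))" if "j < M" for j
    using assms that by (intro sum_pos2[of _ "N - 1"]) (auto simp: less_imp_le)
  then show ?thesis
    using assms Tmap_denominator_pos[where L=L and P=P, OF assms(1,3-5)] by (simp add: pos_vec_def Tmap_def)
qed

theorem mainTheorem2:
  fixes N M :: nat and L :: "nat \<Rightarrow> nat \<Rightarrow> real" and d :: "nat \<Rightarrow> real" and P :: "nat \<Rightarrow> nat"
  assumes NM: "M \<le> N" and Npos: "0 < N"
    and dpos: "\<forall>i<N. 0 < d i"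
    and PN: "0 < P (N - 1)"
    and rank: "full_col_rank N M L"
    and Lnonneg: "\<forall>i<N. \<forall>j<M. 0 \<le> L i j"
    and LN: "\<forall>j<M. 0 < L (N - 1) j"
  shows
    "(\<forall>a b. is_maximizer N M L d P a \<and> is_maximizer N M L d P b \<longrightarrow> (\<forall>j<M. a j = b j))
   \<and> (\<forall>\<alpha>. nonneg_vec M \<alpha> \<longrightarrow>
        (is_maximizer N M L d P \<alpha> \<longleftrightarrow>
          (\<forall>j<M. \<alpha> j * grad N M L d P \<alpha> j = 0) \<and>
          (\<forall>j<M. \<alpha> j = 0 \<longrightarrow> grad N M L d P \<alpha> j \<le> 0)))
   \<and> (\<forall>\<alpha>. is_maximizer N M L d P \<alpha> \<longrightarrow> (\<forall>j<M. Tmap N M L d P \<alpha> j = \<alpha> j))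
   \<and> (\<forall>\<alpha>. pos_vec M \<alpha> \<longrightarrow> pos_vec M (Tmap N M L d P \<alpha>))
   \<and> (\<forall>\<alpha>0. pos_vec M \<alpha>0 \<longrightarrow> (\<forall>n. pos_vec M ((Tmap N M L d P ^^ n) \<alpha>0)))
   \<and> (\<forall>\<alpha>. pos_vec M \<alpha> \<and> (\<forall>j<M. Tmap N M L d P \<alpha> j = \<alpha> j) \<longrightarrow> is_maximizer N M L d P \<alpha>)"
proof -
  have fixed_iff_kkt: "(\<forall>j<M. Tmap N M L d P \<alpha> j = \<alpha> j) \<longleftrightarrow> (\<forall>j<M. \<alpha> j * grad N M L d P \<alpha> j = 0)"
    for \<alpha>
    by (simp add: Tmap_fixed_iff Tmap_denominator_pos[where L=L and P=P, OF Npos PN Lnonneg LN])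
  have kkt_iff: "is_maximizer N M L d P \<alpha> \<longleftrightarrow> kkt_point N M L d P \<alpha>" if "nonneg_vec M \<alpha>" for \<alpha>
    using that is_maximizer_imp_kkt_point kkt_point_imp_is_maximizer[OF dpos] by blast
  have pos: "pos_vec M \<alpha> \<Longrightarrow> pos_vec M (Tmap N M L d P \<alpha>)" for \<alpha>
    by (rule Tmap_pos[where L=L and d=d and P=P, OF Npos dpos PN Lnonneg LN])
  have iterates: "pos_vec M ((Tmap N M L d P ^^ n) \<alpha>0)" if "pos_vec M \<alpha>0" for \<alpha>0 n
    by (induction n) (simp_all add: that pos)
  have maximizer_fixed: "\<forall>j<M. Tmap N M L d P \<alpha> j = \<alpha> j" if "is_maximizer N M L d P \<alpha>" for \<alpha>
    using is_maximizer_imp_kkt_point[OF that] fixed_iff_kkt by (simp add: kkt_point_def)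
  have fixed_maximizer: "is_maximizer N M L d P \<alpha>"
    if "pos_vec M \<alpha>" and "\<forall>j<M. Tmap N M L d P \<alpha> j = \<alpha> j" for \<alpha>
    using that fixed_iff_kkt kkt_iff[of \<alpha>]
    by (auto simp: kkt_point_def pos_vec_def nonneg_vec_def less_imp_le)
  show ?thesis
    using is_maximizer_unique[OF dpos rank] pos iterates maximizer_fixed fixed_maximizer
    by (intro conjI allI impI) (auto simp: kkt_iff kkt_point_def)
qed

end
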